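(* If $p$ is a prime with $p \equiv 3 \pmod 4$, then $S_2(p)$ is infinite.
   Context: For a positive integer $m$, consider positive rational solutions $(x,y)$ of $x^y = y^{mx}$ with $x \neq 1$. For such a solution, $r = \log y / \log x$ is a positive rational number (so $y = x^r$); write $r = a/b$ with $a,b$ positive coprime integers. For an integer $k \ge 1$, $S_k(m)$ denotes the set of such solutions $(x,y)$ for which $|a-b| = k$. *)

theory Defs
  imports Complex_Main "HOL-Computational_Algebra.Primes"
begin

definition S :: "nat \<Rightarrow> nat \<Rightarrow> (rat \<times> rat) set" where
  "S k m = {(x, y). x > 0 \<and> y > 0 \<and> x \<noteq> 1 \<and>
     real_of_rat x powr real_of_rat y = real_of_rat y powr (real m * real_of_rat x) \<and>
     (\<exists>a b :: nat. a > 0 \<and> b > 0 \<and> coprime a b \<and>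
        ln (real_of_rat y) / ln (real_of_rat x) = real a / real b \<and>
        \<bar>int a - int b\<bar> = int k)}"

end

(*
  Pell's equation x\<^sup>2 = p y\<^sup>2 + 1 has a solution with y > 0, found by Dirichlet approximation
  of \<surd>p. For a prime p \<equiv> 3 (mod 4) a descent on y yields a solution with x even, and cubing
  x + y\<surd>p keeps x even while making it larger, so there are infinitely many such x.
  For each of them, a = x + 1 and b = x - 1 are coprime and odd with a b = p y\<^sup>2, so
  q = (x + 1) / y satisfies b q\<^sup>2 = p a; then (q\<^sup>b, q\<^sup>a) lies in S 2 p with ratio a / b,
  and distinct x give distinct ratios.
*)
theory Submission
  imports Defs "HOL-Analysis.Kronecker_Approximation_Theorem" "HOL-Computational_Algebra.Nth_Powers"
    "HOL-Computational_Algebra.Polynomial"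
begin

lemma sqrt_nat_irrational:
  assumes "\<not> is_nth_power 2 D"
  shows "sqrt (real D) \<notin> \<rat>"
proof
  assume "sqrt (real D) \<in> \<rat>"
  then have "sqrt (real D) \<in> \<int>"
    by (intro rational_algebraic_int_is_int algebraic_int_sqrt) simp_all
  then obtain n where n: "sqrt (real D) = of_int n"
    by (auto elim: Ints_cases)
  then have "n \<ge> 0"
    by (metis of_int_0_le_iff real_sqrt_ge_zero of_nat_0_le_iff)
  have "real D = (sqrt (real D))\<^sup>2"
    by simp
  also have "\<dots> = real (nat n ^ 2)"
    using n \<open>n \<ge> 0\<close> by simp
  finally have "D = nat n ^ 2"
    by (simp only: of_nat_eq_iff)
  with assms show False
    by auto
qed

lemma approx_set_sqrt_norm_bound:
  assumes "(h, k) \<in> approx_set (sqrt (real D))"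
  shows "\<bar>h\<^sup>2 - int D * k\<^sup>2\<bar> \<le> 2 * int D + 1"
proof -
  define \<theta> where "\<theta> = sqrt (real D)"
  define d where "d = \<theta> - h / k"
  have "k > 0" and d: "\<bar>d\<bar> < 1 / k\<^sup>2"
    using assms by (auto simp: approx_set_def \<theta>_def d_def)
  then have "\<bar>k\<^sup>2 * d\<bar> < 1"
    by (simp add: abs_mult field_simps)
  have "1 / real_of_int (k\<^sup>2) \<le> 1"
    using \<open>k > 0\<close> by simp
  moreover have "\<theta> \<ge> 0"
    by (simp add: \<theta>_def)
  ultimately have "\<bar>d - 2 * \<theta>\<bar> < 2 * \<theta> + 1"
    using d by linarith
  have "real_of_int (h\<^sup>2 - int D * k\<^sup>2) = (k\<^sup>2 * d) * (d - 2 * \<theta>)"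
    using \<open>k > 0\<close> by (simp add: d_def \<theta>_def field_simps power2_eq_square)
  then have "\<bar>real_of_int (h\<^sup>2 - int D * k\<^sup>2)\<bar> \<le> \<bar>d - 2 * \<theta>\<bar>"
    using \<open>\<bar>k\<^sup>2 * d\<bar> < 1\<close> by (simp add: abs_mult mult_left_le_one_le)
  moreover have "\<theta> \<le> real D"
  proof (cases "D = 0")
    case False
    then have "1 \<le> \<theta>"
      by (simp add: \<theta>_def real_sqrt_ge_one)
    then have "\<theta> \<le> \<theta> * \<theta>"
      by simp
    then show ?thesis
      by (simp add: \<theta>_def)
  qed (simp add: \<theta>_def)
  ultimately show ?thesis
    using \<open>\<bar>d - 2 * \<theta>\<bar> < 2 * \<theta> + 1\<close> by linarith
qed

lemma square_ne_mult_square_of_sqrt_irrational: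
  fixes h k :: int
  assumes "sqrt (real D) \<notin> \<rat>" "k \<noteq> 0"
  shows "h\<^sup>2 \<noteq> int D * k\<^sup>2"
proof
  assume "h\<^sup>2 = int D * k\<^sup>2"
  then have "real_of_int (int D * k\<^sup>2) = real_of_int (h\<^sup>2)"
    by simp
  then have "real D * (real_of_int k)\<^sup>2 = (real_of_int h)\<^sup>2"
    by simp
  then have "sqrt (real D) * \<bar>real_of_int k\<bar> = \<bar>real_of_int h\<bar>"
    by (metis real_sqrt_abs real_sqrt_mult)
  with \<open>k \<noteq> 0\<close> have "sqrt (real D) = of_int \<bar>h\<bar> / of_int \<bar>k\<bar>"
    by (simp add: field_simps)
  with assms(1) show False
    by simp
qed

lemma approx_set_cross_product_eqD:
  assumes "(h1, k1) \<in> approx_set \<theta>" "(h2, k2) \<in> approx_set \<theta>" "h1 * k2 = h2 * k1"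
  shows "h1 = h2 \<and> k1 = k2"
proof -
  have "k1 > 0" "k2 > 0" "coprime h1 k1" "coprime h2 k2"
    using assms(1,2) by (auto simp: approx_set_def)
  with assms(3) show ?thesis
    using coprime_crossproduct'[of k1 k2 h1 h2] by (simp add: mult.commute)
qed

lemma pell_solution_of_congruent_pair:
  fixes D :: nat and h1 k1 h2 k2 N :: int
  assumes norm1: "h1\<^sup>2 - D * k1\<^sup>2 = N" and norm2: "h2\<^sup>2 - D * k2\<^sup>2 = N" and "N \<noteq> 0"
    and "N dvd h2 - h1" "N dvd k2 - k1" and "h1 * k2 \<noteq> h2 * k1"
  shows "\<exists>x y::nat. x\<^sup>2 = D * y\<^sup>2 + 1 \<and> y > 0"
proof -
  \<comment> \<open>\<open>x + y \<surd>D = (h1 - k1 \<surd>D) (h2 + k2 \<surd>D) / N\<close>; the congruences make the division exact\<close>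
  obtain \<alpha> \<beta> where h2: "h2 = h1 + N * \<alpha>" and k2: "k2 = k1 + N * \<beta>"
    using assms(4,5) by (metis dvdE diff_add_cancel add.commute)
  define x where "x = 1 + h1 * \<alpha> - D * k1 * \<beta>"
  define y where "y = h1 * \<beta> - k1 * \<alpha>"
  have x: "h1 * h2 - D * k1 * k2 = N * x"
    by (simp add: norm1[symmetric] h2 k2 x_def algebra_simps power2_eq_square)
  have y: "h1 * k2 - h2 * k1 = N * y"
    by (simp add: h2 k2 y_def algebra_simps)
  have "(h1 * h2 - D * k1 * k2)\<^sup>2 - D * (h1 * k2 - h2 * k1)\<^sup>2
      = (h1\<^sup>2 - D * k1\<^sup>2) * (h2\<^sup>2 - D * k2\<^sup>2)"
    by (simp add: algebra_simps power2_eq_square)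
  then have "N * N * (x\<^sup>2 - D * y\<^sup>2) = N * N * 1"
    unfolding x y norm1 norm2 by (simp add: algebra_simps power2_eq_square)
  with \<open>N \<noteq> 0\<close> have "x\<^sup>2 = D * y\<^sup>2 + 1"
    by simp
  then have "int ((nat \<bar>x\<bar>)\<^sup>2) = int (D * (nat \<bar>y\<bar>)\<^sup>2 + 1)"
    by simp
  then have "(nat \<bar>x\<bar>)\<^sup>2 = D * (nat \<bar>y\<bar>)\<^sup>2 + 1"
    by (simp only: of_nat_eq_iff)
  moreover have "y \<noteq> 0"
    using y assms(6) by auto
  ultimately show ?thesis
    by (metis zero_less_nat_eq zero_less_abs_iff)
qed

text \<open>Among the infinitely many best approximations \<open>h/k\<close> of \<open>\<surd>D\<close>, the norms \<open>h\<^sup>2 - D k\<^sup>2\<close> are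
  bounded and nonzero, so by pigeonhole two of them share the norm \<open>N\<close> and the residues of
  \<open>h\<close> and \<open>k\<close> modulo \<open>N\<close>.\<close>

lemma pell_solution_exists:
  assumes "\<not> is_nth_power 2 D"
  shows "\<exists>x y::nat. x\<^sup>2 = D * y\<^sup>2 + 1 \<and> y > 0"
proof -
  define A where "A = approx_set (sqrt (real D))"
  define N where "N = (\<lambda>(h::int, k::int). h\<^sup>2 - int D * k\<^sup>2)"
  define B where "B = 2 * int D + 1"
  define g where "g = (\<lambda>u. (N u, fst u mod \<bar>N u\<bar>, snd u mod \<bar>N u\<bar>))"
  have irrational: "sqrt (real D) \<notin> \<rat>"
    using assms by (rule sqrt_nat_irrational)
  then have "infinite A"
    by (simp add: A_def rational_iff_finite_approx_set)
  have N_nonzero: "N (h, k) \<noteq> 0" if "(h, k) \<in> A" for h k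
    using that square_ne_mult_square_of_sqrt_irrational[OF irrational]
    by (auto simp: A_def approx_set_def N_def)
  have "g ` A \<subseteq> {-B..B} \<times> {0..B} \<times> {0..B}"
  proof (rule image_subsetI, clarify)
    fix h k assume "(h, k) \<in> A"
    then have "\<bar>N (h, k)\<bar> \<le> B" "N (h, k) \<noteq> 0"
      using approx_set_sqrt_norm_bound N_nonzero by (auto simp: A_def B_def N_def)
    moreover have "a mod \<bar>N (h, k)\<bar> \<in> {0..B}" for a
    proof -
      have "0 \<le> a mod \<bar>N (h, k)\<bar>" "a mod \<bar>N (h, k)\<bar> < \<bar>N (h, k)\<bar>"
        using \<open>N (h, k) \<noteq> 0\<close> by simp_all
      with \<open>\<bar>N (h, k)\<bar> \<le> B\<close> show ?thesis
        by simp
    qed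
    ultimately show "g (h, k) \<in> {-B..B} \<times> {0..B} \<times> {0..B}"
      by (simp add: g_def abs_le_iff)
  qed
  then have "\<not> inj_on g A"
    using \<open>infinite A\<close> finite_imageD finite_subset by (metis finite_SigmaI finite_atLeastAtMost_int)
  then obtain h1 k1 h2 k2 where in_A: "(h1, k1) \<in> A" "(h2, k2) \<in> A"
    and "(h1, k1) \<noteq> (h2, k2)" and "g (h1, k1) = g (h2, k2)"
    unfolding inj_on_def by auto
  then have N_eq: "N (h2, k2) = N (h1, k1)" and "h1 mod \<bar>N (h1, k1)\<bar> = h2 mod \<bar>N (h1, k1)\<bar>"
    and "k1 mod \<bar>N (h1, k1)\<bar> = k2 mod \<bar>N (h1, k1)\<bar>"
    by (auto simp: g_def)
  then have "N (h1, k1) dvd h2 - h1" "N (h1, k1) dvd k2 - k1"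
    by (auto simp: mod_eq_dvd_iff dvd_diff_commute)
  moreover have "h1 * k2 \<noteq> h2 * k1"
    using approx_set_cross_product_eqD in_A \<open>(h1, k1) \<noteq> (h2, k2)\<close> unfolding A_def by blast
  moreover have "h1\<^sup>2 - D * k1\<^sup>2 = N (h1, k1)" "h2\<^sup>2 - D * k2\<^sup>2 = N (h1, k1)"
    using N_eq by (simp_all add: N_def)
  ultimately show ?thesis
    using N_nonzero[OF in_A(1)] pell_solution_of_congruent_pair by blast
qed

lemma square_mod_4_nat: "(s::nat)\<^sup>2 mod 4 = (if even s then 0 else 1)"
proof (cases "even s")
  case True
  then show ?thesis
    by (auto elim!: evenE simp: power2_eq_square)
next
  case False
  then obtain u where "s = 2 * u + 1"
    by (blast elim: oddE)
  then have "s\<^sup>2 = 4 * (u * u + u) + 1"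
    by (simp add: power2_eq_square algebra_simps)
  with False show ?thesis
    by simp
qed

lemma square_plus_one_ne_mult_square:
  fixes p s t :: nat
  assumes "p mod 4 = 3"
  shows "s\<^sup>2 + 1 \<noteq> p * t\<^sup>2"
proof
  assume eq: "s\<^sup>2 + 1 = p * t\<^sup>2"
  have "(s\<^sup>2 + 1) mod 4 = (s\<^sup>2 mod 4 + 1) mod 4"
    by (rule mod_add_left_eq[symmetric])
  then have "(s\<^sup>2 + 1) mod 4 \<in> {1, 2}"
    by (simp add: square_mod_4_nat)
  moreover have "(p * t\<^sup>2) mod 4 = (p mod 4 * (t\<^sup>2 mod 4)) mod 4"
    by (rule mod_mult_eq[symmetric])
  then have "(p * t\<^sup>2) mod 4 \<in> {0, 3}"
    by (simp add: assms square_mod_4_nat)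
  ultimately show False
    unfolding eq by auto
qed

lemma coprime_mult_eq_prime_mult_square:
  fixes p u v z :: nat
  assumes "prime p" "coprime u v" "u * v = p * z\<^sup>2"
  obtains s t where "u = p * t\<^sup>2" "v = s\<^sup>2"
    | s t where "u = s\<^sup>2" "v = p * t\<^sup>2"
proof -
  have "p dvd u * v"
    using assms(3) by simp
  then consider "p dvd u" | "p dvd v"
    using assms(1) prime_dvd_mult_iff by blast
  then show ?thesis
  proof cases
    case 1
    then obtain c where u: "u = p * c" ..
    with assms have "c * v = z\<^sup>2" "coprime c v"
      by (simp_all add: prime_gt_0_nat)
    then have "is_nth_power 2 c" "is_nth_power 2 v"
      using is_nth_power_mult_coprime_nat_iff[of c v 2] by auto
    with u show ?thesis
      using that(1) by (auto elim!: is_nth_powerE)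
  next
    case 2
    then obtain c where v: "v = p * c" ..
    with assms have "u * c = z\<^sup>2" "coprime u c"
      by (simp_all add: prime_gt_0_nat algebra_simps)
    then have "is_nth_power 2 u" "is_nth_power 2 c"
      using is_nth_power_mult_coprime_nat_iff[of u c 2] by auto
    with v show ?thesis
      using that(2) by (auto elim!: is_nth_powerE)
  qed
qed

lemma pell_solution_odd_x_descent:
  fixes p m y :: nat
  assumes "prime p" "p mod 4 = 3" and pell: "(2 * m + 1)\<^sup>2 = p * y\<^sup>2 + 1" and "y > 0"
  obtains s t where "s\<^sup>2 = p * t\<^sup>2 + 1" "0 < t" "t < y"
proof -
  have m_y: "4 * (m * (m + 1)) = p * y\<^sup>2"
    using pell by (simp add: power2_eq_square algebra_simps)
  then have "even (p * y\<^sup>2)"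
    by (simp flip: m_y)
  moreover have "odd p"
    using assms(2) by presburger
  ultimately have "even y"
    by simp
  then obtain z where y: "y = 2 * z" ..
  have m_z: "m * (m + 1) = p * z\<^sup>2"
    using m_y by (simp add: y power2_eq_square)
  have "z > 0"
    using \<open>y > 0\<close> y by simp
  then have "m > 0"
    using m_z assms(1) by (cases m) (auto simp: prime_gt_0_nat)
  from assms(1) coprime_add_one_right m_z show ?thesis
  proof (rule coprime_mult_eq_prime_mult_square)
    fix s t assume m: "m = p * t\<^sup>2" and s: "m + 1 = s\<^sup>2"
    have "t > 0"
      using \<open>m > 0\<close> m by auto
    have "p * z\<^sup>2 = m * (m + 1)"
      by (rule m_z[symmetric])
    also have "\<dots> = p * (t * s)\<^sup>2"
      unfolding s by (simp add: m power_mult_distrib)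
    finally have "z = t * s"
      using assms(1) by (simp add: prime_gt_0_nat power2_eq_iff_nonneg)
    moreover have "s > 0"
      using s by (cases s) auto
    ultimately have "t < y"
      using y \<open>z > 0\<close> by simp
    moreover have "s\<^sup>2 = p * t\<^sup>2 + 1"
      using m s by simp
    ultimately show ?thesis
      using that \<open>t > 0\<close> by blast
  next
    fix s t assume "m = s\<^sup>2" "m + 1 = p * t\<^sup>2"
    then show ?thesis
      using square_plus_one_ne_mult_square[OF assms(2)] by blast
  qed
qed

lemma pell_solution_with_even_x:
  fixes p x y :: nat
  assumes "prime p" "p mod 4 = 3" and "x\<^sup>2 = p * y\<^sup>2 + 1" "y > 0"
  shows "\<exists>X Y. X\<^sup>2 = p * Y\<^sup>2 + 1 \<and> even X"
  using assms(3,4)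
proof (induction y arbitrary: x rule: less_induct)
  case (less y)
  show ?case
  proof (cases "even x")
    case True
    with less.prems show ?thesis
      by blast
  next
    case False
    then obtain m where "x = 2 * m + 1"
      by (blast elim: oddE)
    with less.prems obtain s t where "s\<^sup>2 = p * t\<^sup>2 + 1" "0 < t" "t < y"
      using pell_solution_odd_x_descent[OF assms(1,2)] by metis
    then show ?thesis
      using less.IH by blast
  qed
qed

text \<open>The coefficients of \<open>(x + y \<surd>D)\<^sup>3\<close>.\<close>

lemma pell_solution_cube:
  fixes D x y :: nat
  assumes "x\<^sup>2 = D * y\<^sup>2 + 1"
  shows "(x * (x\<^sup>2 + 3 * D * y\<^sup>2))\<^sup>2 = D * (y * (3 * x\<^sup>2 + D * y\<^sup>2))\<^sup>2 + 1"
proof -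
  have "int ((x * (x\<^sup>2 + 3 * D * y\<^sup>2))\<^sup>2) - int (D * (y * (3 * x\<^sup>2 + D * y\<^sup>2))\<^sup>2)
      = (int (x\<^sup>2) - int (D * y\<^sup>2)) ^ 3"
    by (simp add: algebra_simps power2_eq_square power3_eq_cube)
  also have "\<dots> = 1"
    using assms by simp
  finally show ?thesis
    by linarith
qed

definition even_pell_xs :: "nat \<Rightarrow> nat set" where
  "even_pell_xs D = {x. even x \<and> (\<exists>y. x\<^sup>2 = D * y\<^sup>2 + 1)}"

lemma even_pell_xs_subset: "even_pell_xs D \<subseteq> {2..}"
proof
  fix x assume "x \<in> even_pell_xs D"
  then obtain y where "even x" "x\<^sup>2 = D * y\<^sup>2 + 1"
    by (auto simp: even_pell_xs_def)
  moreover from this have "x \<noteq> 0"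
    by (cases "x = 0") auto
  ultimately show "x \<in> {2..}"
    by simp presburger
qed

lemma infinite_even_pell_xs:
  assumes "X \<in> even_pell_xs D"
  shows "infinite (even_pell_xs D)"
proof
  assume fin: "finite (even_pell_xs D)"
  with assms have "Max (even_pell_xs D) \<in> even_pell_xs D"
    using Max_in by blast
  then obtain x y where x: "x = Max (even_pell_xs D)" "even x" "x\<^sup>2 = D * y\<^sup>2 + 1"
    by (auto simp: even_pell_xs_def)
  define x' where "x' = x * (x\<^sup>2 + 3 * D * y\<^sup>2)"
  have "x' \<in> even_pell_xs D"
    using pell_solution_cube[OF x(3)] x(2) by (auto simp: x'_def even_pell_xs_def)
  moreover have "x \<ge> 2"
    using even_pell_xs_subset \<open>Max (even_pell_xs D) \<in> even_pell_xs D\<close> x(1) by auto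
  then have "x < x'"
    using power_mono[OF \<open>x \<ge> 2\<close>, of 2] by (simp add: x'_def)
  ultimately show False
    using Max_ge[OF fin] x(1) by fastforce
qed

lemma power_pair_mem_S:
  fixes q :: rat and b k m :: nat
  assumes "q > 0" "b > 0" "k > 0" "coprime (b + k) b"
    and balance: "real b * real_of_rat q ^ k = real (b + k) * real m"
  shows "(q ^ b, q ^ (b + k)) \<in> S k m"
    and "ln (real_of_rat (q ^ (b + k))) / ln (real_of_rat (q ^ b)) = real (b + k) / real b"
proof -
  define r where "r = real_of_rat q"
  have "r > 0"
    using assms(1) by (simp add: r_def)
  have "r \<noteq> 1"
  proof
    assume "r = 1"
    with balance have "real b = real ((b + k) * m)"
      by (simp add: r_def)
    then have "b = (b + k) * m"
      by (simp only: of_nat_eq_iff)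
    with \<open>b > 0\<close> \<open>k > 0\<close> show False
      by (cases m) auto
  qed
  with \<open>r > 0\<close> have "ln r \<noteq> 0"
    by simp
  have power: "real_of_rat (q ^ n) = r ^ n" for n
    by (simp add: r_def of_rat_power)
  have ln_power: "ln (real_of_rat (q ^ n)) = real n * ln r" for n
    by (simp add: power ln_realpow)
  show ratio: "ln (real_of_rat (q ^ (b + k))) / ln (real_of_rat (q ^ b)) = real (b + k) / real b"
    using \<open>ln r \<noteq> 0\<close> by (simp add: ln_power)
  have "q ^ b \<noteq> 1"
    using ln_power[of b] \<open>ln r \<noteq> 0\<close> \<open>b > 0\<close> by auto
  have "real_of_rat (q ^ b) powr real_of_rat (q ^ (b + k)) = exp (real b * r ^ (b + k) * ln r)"
    using \<open>r > 0\<close> by (simp add: powr_def power ln_realpow mult_ac)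
  also have "\<dots> = exp (real b * r ^ k * r ^ b * ln r)"
    by (simp add: power_add mult_ac)
  also have "\<dots> = exp (real (b + k) * real m * r ^ b * ln r)"
    using balance by (simp add: r_def)
  also have "\<dots> = real_of_rat (q ^ (b + k)) powr (real m * real_of_rat (q ^ b))"
    using \<open>r > 0\<close> by (simp add: powr_def power ln_realpow mult_ac)
  moreover have "\<exists>a' b'::nat. a' > 0 \<and> b' > 0 \<and> coprime a' b' \<and>
      ln (real_of_rat (q ^ (b + k))) / ln (real_of_rat (q ^ b)) = real a' / real b' \<and>
      \<bar>int a' - int b'\<bar> = int k"
    using assms(2,4) ratio by (intro exI[of _ "b + k"] exI[of _ b]) simp
  ultimately show "(q ^ b, q ^ (b + k)) \<in> S k m"
    unfolding S_def using assms(1) \<open>q ^ b \<noteq> 1\<close> by simp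
qed

lemma even_pell_solution_mem_S:
  fixes m X Y :: nat
  assumes pell: "X\<^sup>2 = m * Y\<^sup>2 + 1" and "even X"
  shows "\<exists>z \<in> S 2 m. ln (real_of_rat (snd z)) / ln (real_of_rat (fst z)) = real (X + 1) / real (X - 1)"
proof -
  define b where "b = X - 1"
  have "X \<noteq> 0"
    using pell by (cases "X = 0") auto
  with \<open>even X\<close> have X: "X = b + 1" and "odd b" "b > 0"
    unfolding b_def by presburger+
  have factor: "b * (b + 2) = m * Y\<^sup>2"
    using pell by (simp add: X power2_eq_square algebra_simps)
  with \<open>b > 0\<close> have "Y > 0"
    by (cases "Y = 0") auto
  define q :: rat where "q = of_nat (b + 2) / of_nat Y"
  have "q > 0"
    using \<open>Y > 0\<close> by (simp add: q_def)
  have "real_of_rat q = real (b + 2) / real Y"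
    unfolding q_def by (simp only: of_rat_divide of_rat_of_nat_eq)
  then have "real b * (real_of_rat q)\<^sup>2 = (real b * real (b + 2)) * real (b + 2) / (real Y)\<^sup>2"
    by (simp add: power_divide power2_eq_square)
  also have "\<dots> = real m * (real Y)\<^sup>2 * real (b + 2) / (real Y)\<^sup>2"
    using factor by (metis of_nat_mult of_nat_power)
  also have "\<dots> = real (b + 2) * real m"
    using \<open>Y > 0\<close> by simp
  finally have balance: "real b * real_of_rat q ^ 2 = real (b + 2) * real m" .
  have "gcd (b + 2) b = gcd 2 b"
    by (metis gcd_add1 add.commute)
  with \<open>odd b\<close> have "coprime (b + 2) b"
    by (simp add: coprime_iff_gcd_eq_1 flip: coprime_left_2_iff_odd)
  from power_pair_mem_S[OF \<open>q > 0\<close> \<open>b > 0\<close> _ this balance]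
  show ?thesis
    unfolding X by force
qed

lemma inj_on_succ_div_pred: "inj_on (\<lambda>x::nat. real (x + 1) / real (x - 1)) {2..}"
proof (rule inj_onI)
  fix x y :: nat
  assume "x \<in> {2..}" "y \<in> {2..}" and eq: "real (x + 1) / real (x - 1) = real (y + 1) / real (y - 1)"
  then have "real x > 1" "real y > 1" and "real (x - 1) = real x - 1" "real (y - 1) = real y - 1"
    by (simp_all add: of_nat_diff)
  with eq have "(real x + 1) * (real y - 1) = (real y + 1) * (real x - 1)"
    by (simp add: field_simps)
  then show "x = y"
    by (simp add: algebra_simps)
qed

lemma succ_div_pred_image_even_pell_xs_subset:
  "(\<lambda>x. real (x + 1) / real (x - 1)) ` even_pell_xs m
    \<subseteq> (\<lambda>z. ln (real_of_rat (snd z)) / ln (real_of_rat (fst z))) ` S 2 m"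
proof
  fix r assume "r \<in> (\<lambda>x. real (x + 1) / real (x - 1)) ` even_pell_xs m"
  then obtain x y where "r = real (x + 1) / real (x - 1)" "x\<^sup>2 = m * y\<^sup>2 + 1" "even x"
    by (auto simp: even_pell_xs_def)
  then show "r \<in> (\<lambda>z. ln (real_of_rat (snd z)) / ln (real_of_rat (fst z))) ` S 2 m"
    using even_pell_solution_mem_S[of x m y] by (fastforce intro: rev_image_eqI)
qed

theorem lemma6:
  fixes p :: nat
  assumes "prime p" and "p mod 4 = 3"
  shows "infinite (S 2 p)"
proof -
  have "\<not> is_nth_power 2 p"
    using is_nth_power_prime_power_nat_iff[OF assms(1), of 2 1] by simp
  then obtain x y where "x\<^sup>2 = p * y\<^sup>2 + 1" "y > 0"
    using pell_solution_exists by blast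
  then obtain X Y where "X\<^sup>2 = p * Y\<^sup>2 + 1" "even X"
    using pell_solution_with_even_x assms by blast
  then have "infinite (even_pell_xs p)"
    by (intro infinite_even_pell_xs) (auto simp: even_pell_xs_def)
  moreover have "inj_on (\<lambda>x. real (x + 1) / real (x - 1)) (even_pell_xs p)"
    using inj_on_succ_div_pred even_pell_xs_subset by (rule inj_on_subset)
  ultimately show ?thesis
    using succ_div_pred_image_even_pell_xs_subset
    by (meson finite_imageD finite_imageI finite_subset)
qed

end
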